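(* There is an absolute constant $C$ such that the following holds. Let $\Sigma$ be a set with $|\Sigma|=r\ge 2$. If $n\ge 2+\log r$ and $\ell\ge 2^7r^3n$, then there exists a set $S\subseteq\Sigma^\ell$ of size $2^n$ such that for all $(v,a)\in S\times\Sigma$: (1) $|v[a]|\ge \frac{\ell}{2r}$; and (2) for every $I\subseteq v[a]$ of size $\ell/(8r)$, there are at most $Cr^2$ pairs $(w,b)\in S\times\Sigma$ for which $|I\cap w[b]|\ge \frac12|v[a]\cap w[b]|$.
   Context: For $v=(v_1,\dots,v_\ell)\in\Sigma^\ell$ and $a\in\Sigma$, $v[a]=\{i\in\{1,\dots,\ell\}: v_i=a\}$. Logarithms are base 2. *)

theory Defs
  imports Complex_Main
begin

text \<open>Words v in Sigma^l are lists of length l; positions are 0-based (0..l-1).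
  occ v a is the paper's v[a], the set of positions where v has letter a.\<close>
definition occ :: "'a list \<Rightarrow> 'a \<Rightarrow> nat set" where
  "occ v a = {i. i < length v \<and> v ! i = a}"

end

theory Submission
  imports Defs "HOL-Library.FuncSet"
begin

(* Probabilistic method, phrased as counting. Take a tuple of 2^n words of length l. It is bad if
   some word has fewer than l/(2r) copies of some letter, if two entries coincide, or if for some
   entry v, letter a and I \<subseteq> v[a] of size l/(8r) there are K = 128 r^2 pairs (j, b), with j
   another entry, for which I contains at least half of v[a] \<inter> w_j[b]. Each kind of bad tuple makes
   up at most a quarter of all tuples, so a good tuple exists, and its entries form S: besides
   fewer than K pairs from other entries, v can only be captured by the r pairs (v, b).
   The first and third counts are Chernoff bounds by exponential moments. For the third, after a
   union bound over the entry, a, I and the set of K pairs, the other entries are independent;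
   a word w captures v[a] \<inter> w[b] only if it hits the large part v[a] - I of v[a] no more often
   than the small part I, which costs a factor exp (- (l/(8r) - 3) / (2r)) per pair. *)

definition words :: "'a set \<Rightarrow> nat \<Rightarrow> 'a list set" where
  "words A l = {v. length v = l \<and> set v \<subseteq> A}"

definition captures :: "nat set \<Rightarrow> 'a list \<Rightarrow> 'a \<Rightarrow> 'a list \<Rightarrow> 'a \<Rightarrow> bool" where
  "captures I v a w b \<longleftrightarrow> card (occ v a \<inter> occ w b) \<le> 2 * card (I \<inter> occ w b)"

lemma words_eq_lists_length: "words A l = {xs. set xs \<subseteq> A \<and> length xs = l}"
  by (auto simp: words_def)

lemma finite_words: "finite A \<Longrightarrow> finite (words A l)"
  by (simp add: words_eq_lists_length finite_lists_length_eq)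

lemma card_words: "finite A \<Longrightarrow> card (words A l) = card A ^ l"
  by (simp add: words_eq_lists_length card_lists_length_eq)

lemma finite_occ [simp]: "finite (occ v a)"
  by (simp add: occ_def)

lemma occ_subset_lessThan: "occ v a \<subseteq> {..<length v}"
  by (auto simp: occ_def)

section \<open>Counting words by exponential moments\<close>

lemma sum_words_prod_nth:
  fixes g :: "nat \<Rightarrow> 'a \<Rightarrow> 'b::comm_semiring_1"
  shows "(\<Sum>w\<in>words A l. \<Prod>i<l. g i (w!i)) = (\<Prod>i<l. \<Sum>c\<in>A. g i c)"
proof (induction l arbitrary: g)
  case 0
  have "words A 0 = {[]}" by (auto simp: words_def)
  then show ?case by simp
next
  case (Suc l)
  have words_Suc: "words A (Suc l) = (\<lambda>(c, w). c # w) ` (A \<times> words A l)"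
    by (auto simp: words_def length_Suc_conv)
  have "inj_on (\<lambda>(c, w). c # w) (A \<times> words A l)"
    by (auto simp: inj_on_def)
  then have "(\<Sum>w\<in>words A (Suc l). \<Prod>i<Suc l. g i (w!i))
      = (\<Sum>(c, w)\<in>A \<times> words A l. g 0 c * (\<Prod>i<l. g (Suc i) (w!i)))"
    unfolding words_Suc by (subst sum.reindex) (auto simp: prod.lessThan_Suc_shift
        simp del: prod.lessThan_Suc intro!: sum.cong)
  also have "\<dots> = (\<Sum>c\<in>A. g 0 c) * (\<Sum>w\<in>words A l. \<Prod>i<l. g (Suc i) (w!i))"
    by (simp add: sum.cartesian_product sum_product)
  also have "\<dots> = (\<Prod>i<Suc l. \<Sum>c\<in>A. g i c)"
    by (simp add: Suc.IH[of "\<lambda>i. g (Suc i)"] prod.lessThan_Suc_shift del: prod.lessThan_Suc)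
  finally show ?case .
qed

(* Each word of S has weight at least 1, and the total weight of all words factorises over the
   positions. *)
lemma card_words_le_exp_moment:
  fixes \<phi> :: "nat \<Rightarrow> 'a \<Rightarrow> real"
  assumes "finite A" "S \<subseteq> words A l"
    and "\<And>w. w \<in> S \<Longrightarrow> 0 \<le> (\<Sum>i<l. \<phi> i (w!i))"
    and "\<And>i. i < l \<Longrightarrow> (\<Sum>c\<in>A. exp (\<phi> i c)) \<le> card A * exp (\<theta> i)"
  shows "card S \<le> real (card A) ^ l * exp (\<Sum>i<l. \<theta> i)"
proof -
  have "real (card S) = (\<Sum>w\<in>S. 1)"
    by simp
  also have "\<dots> \<le> (\<Sum>w\<in>S. exp (\<Sum>i<l. \<phi> i (w!i)))"
    using assms(3) by (intro sum_mono) simp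
  also have "\<dots> = (\<Sum>w\<in>S. \<Prod>i<l. exp (\<phi> i (w!i)))"
    by (simp add: exp_sum)
  also have "\<dots> \<le> (\<Sum>w\<in>words A l. \<Prod>i<l. exp (\<phi> i (w!i)))"
    using assms(1,2) by (intro sum_mono2) (auto simp: finite_words prod_nonneg)
  also have "\<dots> = (\<Prod>i<l. \<Sum>c\<in>A. exp (\<phi> i c))"
    by (rule sum_words_prod_nth)
  also have "\<dots> \<le> (\<Prod>i<l. card A * exp (\<theta> i))"
    using assms(4) by (intro prod_mono) (auto intro: sum_nonneg)
  also have "\<dots> = real (card A) ^ l * exp (\<Sum>i<l. \<theta> i)"
    by (simp add: prod.distrib exp_sum)
  finally show ?thesis .
qed

lemma exp_minus_half_le: "exp (- 1/2 :: real) \<le> 2/3"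
proof -
  have "3/2 \<le> exp (1/2 :: real)"
    using exp_ge_add_one_self[of "1/2 :: real"] by simp
  then show ?thesis
    by (simp add: exp_minus field_simps)
qed

lemma card_words_few_occ:
  assumes "finite A" "a \<in> A"
  shows "card {w \<in> words A l. l > 2 * card A * card (occ w a)}
    \<le> real (card A) ^ l * exp (- (l / (12 * card A)))"
proof -
  define r where "r = real (card A)"
  have r_pos: "r > 0"
    using assms card_gt_0_iff unfolding r_def by fastforce
  define \<phi> where "\<phi> i c = 1 / (4 * r) - of_bool (c = a) / 2" for i :: nat and c
  have "card {w \<in> words A l. l > 2 * card A * card (occ w a)}
      \<le> real (card A) ^ l * exp (\<Sum>i<l. - 1 / (12 * r))"
  proof (rule card_words_le_exp_moment[OF assms(1), where \<phi> = \<phi>])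
    fix w assume "w \<in> {w \<in> words A l. l > 2 * card A * card (occ w a)}"
    then have w: "length w = l" "2 * card A * card (occ w a) < l"
      by (auto simp: words_def)
    then have few: "2 * r * card (occ w a) < l"
      unfolding r_def by (metis of_nat_less_iff of_nat_mult of_nat_numeral)
    have "{..<l} \<inter> {i. w ! i = a} = occ w a"
      using w(1) by (auto simp: occ_def)
    then have "(\<Sum>i<l. \<phi> i (w!i)) = l / (4 * r) - card (occ w a) / 2"
      by (simp add: \<phi>_def sum_subtractf sum_divide_distrib[symmetric])
    moreover have "card (occ w a) / 2 \<le> l / (4 * r)"
      using few r_pos by (simp add: field_simps)
    ultimately show "0 \<le> (\<Sum>i<l. \<phi> i (w!i))"
      by linarith
  next
    fix i
    have "(\<Sum>c\<in>A. exp (\<phi> i c)) = exp (1 / (4 * r)) * (\<Sum>c\<in>A. exp (- of_bool (c = a) / 2))"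
      unfolding sum_distrib_left \<phi>_def by (simp add: exp_add[symmetric])
    also have "(\<Sum>c\<in>A. exp (- of_bool (c = a) / 2)) = exp (- 1/2) + (r - 1)"
      using assms r_pos by (simp add: sum.remove r_def card_Diff_singleton of_nat_diff Suc_le_eq)
    also have "\<dots> \<le> r * (1 - 1 / (3 * r))"
      using exp_minus_half_le r_pos by (simp add: field_simps)
    also have "\<dots> \<le> r * exp (- (1 / (3 * r)))"
      using r_pos exp_ge_add_one_self[of "- (1 / (3 * r))"] by (intro mult_left_mono) auto
    finally have "(\<Sum>c\<in>A. exp (\<phi> i c)) \<le> r * (exp (1 / (4 * r)) * exp (- (1 / (3 * r))))"
      by (simp add: mult_left_mono mult.left_commute)
    also have "exp (1 / (4 * r)) * exp (- (1 / (3 * r))) = exp (- 1 / (12 * r))"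
      using r_pos by (simp add: exp_add[symmetric] field_simps)
    finally show "(\<Sum>c\<in>A. exp (\<phi> i c)) \<le> real (card A) * exp (- 1 / (12 * r))"
      by (simp add: r_def)
  qed auto
  also have "(\<Sum>i<l. - 1 / (12 * r)) = - (l / (12 * r))"
    by simp
  finally show ?thesis
    by (simp add: r_def divide_minus_left)
qed

lemma sum_occ_letters_eq:
  fixes f :: "nat \<Rightarrow> 'b::semiring_1"
  assumes "finite B"
  shows "(\<Sum>b\<in>B. \<Sum>i\<in>occ w b. f i) = (\<Sum>i<length w. f i * of_bool (w!i \<in> B))"
proof -
  have "(\<Sum>b\<in>B. \<Sum>i\<in>occ w b. f i) = (\<Sum>i\<in>(\<Union>b\<in>B. occ w b). f i)"
    using assms by (intro sum.UNION_disjoint[symmetric]) (auto simp: occ_def)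
  also have "(\<Union>b\<in>B. occ w b) = {..<length w} \<inter> {i. w!i \<in> B}"
    by (auto simp: occ_def)
  finally show ?thesis
    by simp
qed

lemma sum_exp_indicator_le:
  assumes "finite A" "B \<subseteq> A" "A \<noteq> {}"
  shows "(\<Sum>c\<in>A. exp (x * of_bool (c \<in> B))) \<le> card A * exp (card B * (exp x - 1) / card A)"
proof -
  have card_pos: "card A > 0"
    using assms(1,3) by (simp add: card_gt_0_iff)
  have "(\<Sum>c\<in>A. exp (x * of_bool (c \<in> B))) = (\<Sum>c\<in>A - B. 1) + (\<Sum>c\<in>B. exp x)"
    using assms by (simp add: sum.subset_diff[of B A])
  also have "\<dots> = card A * (1 + card B * (exp x - 1) / card A)"
    using assms card_pos
    by (simp add: card_Diff_subset card_mono finite_subset of_nat_diff field_simps)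
  also have "\<dots> \<le> card A * exp (card B * (exp x - 1) / card A)"
    by (intro mult_left_mono exp_ge_add_one_self) simp
  finally show ?thesis .
qed

lemma card_occ_Diff_le_of_captures:
  assumes "captures I v a w b" "I \<subseteq> occ v a"
  shows "card ((occ v a - I) \<inter> occ w b) \<le> card (I \<inter> occ w b)"
proof -
  have "occ v a \<inter> occ w b = (I \<inter> occ w b) \<union> ((occ v a - I) \<inter> occ w b)"
    using assms(2) by blast
  then have "card (occ v a \<inter> occ w b) = card (I \<inter> occ w b) + card ((occ v a - I) \<inter> occ w b)"
    by (simp add: card_Un_disjoint disjoint_iff)
  with assms(1) show ?thesis
    by (simp add: captures_def)
qed

lemma capture_weight_nonneg:
  assumes "finite B" "I \<subseteq> occ v a" "\<forall>b\<in>B. captures I v a w b"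
  shows "0 \<le> (\<Sum>i<length w.
    (of_bool (i \<in> I) - of_bool (i \<in> occ v a - I)) * of_bool (w!i \<in> B) :: real)"
proof -
  have "0 \<le> (\<Sum>b\<in>B. \<Sum>i\<in>occ w b. of_bool (i \<in> I) - of_bool (i \<in> occ v a - I) :: real)"
  proof (rule sum_nonneg)
    fix b assume "b \<in> B"
    then have "captures I v a w b"
      using assms(3) by simp
    then have "card ((occ v a - I) \<inter> occ w b) \<le> card (I \<inter> occ w b)"
      using assms(2) by (rule card_occ_Diff_le_of_captures)
    then show "0 \<le> (\<Sum>i\<in>occ w b. of_bool (i \<in> I) - of_bool (i \<in> occ v a - I) :: real)"
      by (simp add: sum_subtractf Int_commute set_diff_eq)
  qed
  then show ?thesis
    by (simp only: sum_occ_letters_eq[OF assms(1)])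
qed

(* Weight 2 on the positions of I and 1/2 on the rest of v[a], for letters in B: a capturing word
   has weight at least 1, whereas the average weight is small because I is only about a quarter
   of v[a]. *)
lemma card_words_capturing:
  assumes "finite A" "A \<noteq> {}" "B \<subseteq> A" "length v = l" "I \<subseteq> occ v a"
    and many: "l \<le> 2 * card A * card (occ v a)"
    and small: "card I \<le> l / (8 * card A) + 1"
  shows "card {w \<in> words A l. \<forall>b\<in>B. captures I v a w b}
    \<le> real (card A) ^ l * exp (- real (card B) * ((l / (8 * card A) - 3) / (2 * card A)))"
proof -
  define r t where "r = real (card A)" and "t = real (card B)"
  define J where "J = occ v a - I"
  define \<sigma> :: "nat \<Rightarrow> real" where "\<sigma> i = of_bool (i \<in> I) - of_bool (i \<in> J)" for i
  define \<theta> where "\<theta> i = t / r * of_bool (i \<in> I) - t / (2 * r) * of_bool (i \<in> J)" for i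
  have r_pos: "r > 0"
    using assms(1,2) by (simp add: r_def card_gt_0_iff)
  have I_J: "I \<inter> J = {}" "occ v a = I \<union> J" "I \<subseteq> {..<l}" "J \<subseteq> {..<l}"
    using occ_subset_lessThan[of v a] assms(4,5) by (auto simp: J_def)
  have moment: "card {w \<in> words A l. \<forall>b\<in>B. captures I v a w b} \<le> r ^ l * exp (\<Sum>i<l. \<theta> i)"
    unfolding r_def
  proof (rule card_words_le_exp_moment[OF assms(1), where \<phi> = "\<lambda>i c. ln 2 * \<sigma> i * of_bool (c \<in> B)"])
    fix w assume "w \<in> {w \<in> words A l. \<forall>b\<in>B. captures I v a w b}"
    then show "0 \<le> (\<Sum>i<l. ln 2 * \<sigma> i * of_bool (w!i \<in> B))"
      using capture_weight_nonneg[OF finite_subset[OF assms(3,1)] assms(5), of w]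
      by (simp add: words_def \<sigma>_def J_def mult.assoc flip: sum_distrib_left)
  next
    fix i
    have "t * (exp (ln 2 * \<sigma> i) - 1) / r = \<theta> i"
      using I_J(1) by (cases "i \<in> I"; cases "i \<in> J") (auto simp: \<sigma>_def \<theta>_def exp_minus)
    then show "(\<Sum>c\<in>A. exp (ln 2 * \<sigma> i * of_bool (c \<in> B))) \<le> real (card A) * exp (\<theta> i)"
      using sum_exp_indicator_le[OF assms(1,3,2), of "ln 2 * \<sigma> i"] by (simp add: r_def t_def)
  qed auto
  have "(\<Sum>i<l. \<theta> i) = t / r * (\<Sum>i<l. of_bool (i \<in> I)) - t / (2 * r) * (\<Sum>i<l. of_bool (i \<in> J))"
    by (simp only: \<theta>_def sum_subtractf sum_distrib_left)
  also have "\<dots> = t / r * card I - t / (2 * r) * card J"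
    using I_J(3,4) by (simp add: Int_absorb1 Int_absorb2)
  also have "\<dots> \<le> - t * ((l / (8 * r) - 3) / (2 * r))"
  proof -
    have "card (occ v a) = card I + card J"
      using I_J by (simp add: card_Un_disjoint finite_subset)
    moreover have "l \<le> 2 * r * card (occ v a)"
      using many unfolding r_def by (metis of_nat_le_iff of_nat_mult of_nat_numeral)
    ultimately have "l / (8 * r) \<le> (card I + card J) / 4"
      using r_pos by (simp add: field_simps)
    then have "t / (2 * r) * (2 * real (card I) - card J + (l / (8 * r) - 3)) \<le> 0"
      using small r_pos by (intro mult_nonneg_nonpos) (auto simp: r_def t_def)
    moreover have "t / r * card I - t / (2 * r) * card J + t * ((l / (8 * r) - 3) / (2 * r))
        = t / (2 * r) * (2 * real (card I) - card J + (l / (8 * r) - 3))"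
      using r_pos by (simp add: field_simps)
    ultimately show ?thesis
      by linarith
  qed
  finally have "exp (\<Sum>i<l. \<theta> i) \<le> exp (- t * ((l / (8 * r) - 3) / (2 * r)))"
    by simp
  then show ?thesis
    using moment by (simp add: r_def t_def order_trans[OF _ mult_left_mono])
qed

section \<open>Counting tuples of words\<close>

lemma card_UN_le_mult:
  fixes m b :: real
  assumes "finite I" "card I \<le> m" "\<And>i. i \<in> I \<Longrightarrow> real (card (F i)) \<le> b" "0 \<le> b"
  shows "card (\<Union>i\<in>I. F i) \<le> m * b"
proof -
  have "card (\<Union>i\<in>I. F i) \<le> (\<Sum>i\<in>I. card (F i))"
    by (rule card_UN_le[OF assms(1)])
  then have "card (\<Union>i\<in>I. F i) \<le> (\<Sum>i\<in>I. real (card (F i)))"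
    by (metis of_nat_le_iff of_nat_sum)
  also have "\<dots> \<le> card I * b"
    using sum_bounded_above[of I "\<lambda>i. real (card (F i))" b] assms(3) by simp
  also have "\<dots> \<le> m * b"
    using assms(2,4) by (simp add: mult_right_mono)
  finally show ?thesis .
qed

lemma card_PiE_fix_coordinate:
  fixes N :: nat
  assumes "i < N"
  shows "card (\<Pi>\<^sub>E j\<in>{..<N}. if j = i then T else F j) = card T * (\<Prod>j\<in>{..<N} - {i}. card (F j))"
proof -
  have "card (\<Pi>\<^sub>E j\<in>{..<N}. if j = i then T else F j) = (\<Prod>j<N. card (if j = i then T else F j))"
    by (rule card_PiE) simp
  also have "\<dots> = card T * (\<Prod>j\<in>{..<N} - {i}. card (if j = i then T else F j))"
    using assms by (simp add: prod.remove)
  also have "(\<Prod>j\<in>{..<N} - {i}. card (if j = i then T else F j)) = (\<Prod>j\<in>{..<N} - {i}. card (F j))"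
    by (rule prod.cong) auto
  finally show ?thesis .
qed

lemma card_tuples_collision:
  fixes N :: nat
  assumes "finite W" "i < N" "j < N" "i \<noteq> j"
  shows "card {x \<in> {..<N} \<rightarrow>\<^sub>E W. x i = x j} \<le> card W ^ (N - 1)"
proof -
  let ?C = "{x \<in> {..<N} \<rightarrow>\<^sub>E W. x i = x j}"
  let ?drop_j = "\<lambda>x. restrict x ({..<N} - {j})"
  have "inj_on ?drop_j ?C"
  proof (rule inj_onI)
    fix x y assume x: "x \<in> ?C" and y: "y \<in> ?C" and eq: "?drop_j x = ?drop_j y"
    have off_j: "x m = y m" if "m \<in> {..<N} - {j}" for m
      using fun_cong[OF eq, of m] that by simp
    have "x j = y j"
      using off_j[of i] x y assms(2,4) by simp
    then have "x m = y m" if "m < N" for m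
      using off_j that by (cases "m = j") auto
    then show "x = y"
      using x y by (intro PiE_ext[of x "{..<N}" "\<lambda>_. W"]) auto
  qed
  moreover have "?drop_j ` ?C \<subseteq> {..<N} - {j} \<rightarrow>\<^sub>E W"
    by (rule image_subsetI) (simp add: restrict_PiE_iff PiE_iff)
  ultimately have "card ?C \<le> card ({..<N} - {j} \<rightarrow>\<^sub>E W)"
    using assms(1) by (intro card_inj_on_le) (auto intro: finite_PiE)
  also have "\<dots> = card W ^ (N - 1)"
    using assms(3) by (simp add: card_PiE)
  finally show ?thesis .
qed

lemma card_tuples_not_inj:
  fixes N :: nat
  assumes "finite W"
  shows "card {x \<in> {..<N} \<rightarrow>\<^sub>E W. \<not> inj_on x {..<N}} \<le> N * N * card W ^ (N - 1)"
proof -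
  define P where "P = {p \<in> {..<N} \<times> {..<N}. fst p \<noteq> snd p}"
  define C where "C p = {x \<in> {..<N} \<rightarrow>\<^sub>E W. x (fst p) = x (snd p)}" for p
  have "{x \<in> {..<N} \<rightarrow>\<^sub>E W. \<not> inj_on x {..<N}} \<subseteq> (\<Union>p\<in>P. C p)"
    by (auto simp: P_def C_def inj_on_def)
  moreover have "finite (\<Union>p\<in>P. C p)"
    by (rule finite_subset[of _ "{..<N} \<rightarrow>\<^sub>E W"]) (auto simp: C_def assms finite_PiE)
  ultimately have "card {x \<in> {..<N} \<rightarrow>\<^sub>E W. \<not> inj_on x {..<N}} \<le> card (\<Union>p\<in>P. C p)"
    by (rule card_mono[rotated])
  also have "\<dots> \<le> (\<Sum>p\<in>P. card (C p))"
    by (rule card_UN_le) (simp add: P_def)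
  also have "\<dots> \<le> card P * card W ^ (N - 1)"
  proof -
    have "card (C p) \<le> card W ^ (N - 1)" if "p \<in> P" for p
      using card_tuples_collision[OF assms] that by (auto simp: P_def C_def)
    then show ?thesis
      using sum_bounded_above[of P "\<lambda>p. card (C p)"] by simp
  qed
  also have "card P \<le> N * N"
    using card_mono[of "{..<N} \<times> {..<N}" P] by (auto simp: P_def)
  finally show ?thesis
    by (simp add: mult_right_mono)
qed

lemma card_tuples_few_occ:
  fixes N :: nat
  assumes "finite A"
  shows "card {x \<in> {..<N} \<rightarrow>\<^sub>E words A l. \<exists>i<N. \<exists>a\<in>A. l > 2 * card A * card (occ (x i) a)}
    \<le> N * card A * (exp (- (l / (12 * card A))) * (real (card A) ^ l) ^ N)"
proof -
  define W where "W = words A l"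
  define few where "few a = {w \<in> W. l > 2 * card A * card (occ w a)}" for a
  define F where "F p = (\<Pi>\<^sub>E j\<in>{..<N}. if j = fst p then few (snd p) else W)" for p
  have fin_W: "finite W"
    using assms by (simp add: W_def finite_words)
  have "{x \<in> {..<N} \<rightarrow>\<^sub>E W. \<exists>i<N. \<exists>a\<in>A. l > 2 * card A * card (occ (x i) a)} \<subseteq> (\<Union>p\<in>{..<N} \<times> A. F p)"
    by (force simp: F_def few_def PiE_iff)
  moreover have "finite (\<Union>p\<in>{..<N} \<times> A. F p)"
    using assms fin_W by (auto simp: F_def few_def intro!: finite_PiE)
  moreover have "card (\<Union>p\<in>{..<N} \<times> A. F p)
      \<le> N * card A * (exp (- (l / (12 * card A))) * (real (card A) ^ l) ^ N)"
  proof (rule card_UN_le_mult)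
    fix p assume p: "p \<in> {..<N} \<times> A"
    then have N: "N = Suc (N - 1)"
      by auto
    have "card (F p) = card (few (snd p)) * card W ^ (N - 1)"
      using p card_PiE_fix_coordinate[of "fst p" N "few (snd p)" "\<lambda>_. W"] by (auto simp: F_def)
    moreover have "card (few (snd p)) \<le> real (card A) ^ l * exp (- (l / (12 * card A)))"
      using card_words_few_occ[OF assms, of "snd p" l] p by (auto simp: few_def W_def)
    ultimately have "card (F p)
        \<le> real (card A) ^ l * exp (- (l / (12 * card A))) * (real (card A) ^ l) ^ (N - 1)"
      by (simp add: W_def card_words[OF assms] mult_right_mono)
    also have "\<dots> = exp (- (l / (12 * card A))) * (real (card A) ^ l) ^ N"
      by (subst N) (simp add: mult_ac)
    finally show "real (card (F p)) \<le> exp (- (l / (12 * card A))) * (real (card A) ^ l) ^ N" .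
  qed (use assms in \<open>auto simp: card_cartesian_product\<close>)
  ultimately show ?thesis
    unfolding W_def by (meson card_mono of_nat_le_iff order_trans)
qed

lemma card_eq_sum_card_rows:
  assumes "finite D" "finite B" "Q \<subseteq> D \<times> B"
  shows "card Q = (\<Sum>j\<in>D. card {b. (j, b) \<in> Q})"
proof -
  have "Q = (SIGMA j:D. {b. (j, b) \<in> Q})"
    using assms(3) by auto
  moreover have "finite {b. (j, b) \<in> Q}" for j
    using assms(2,3) by (auto intro: finite_subset)
  ultimately show ?thesis
    using assms(1) by (metis card_SigmaI)
qed

lemma card_tuples_capturing_set:
  fixes N :: nat
  assumes "finite A" "A \<noteq> {}" "i < N" "Q \<subseteq> ({..<N} - {i}) \<times> A"
    and small: "card I \<le> l / (8 * card A) + 1"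
  shows "card {x \<in> {..<N} \<rightarrow>\<^sub>E words A l. I \<subseteq> occ (x i) a \<and> l \<le> 2 * card A * card (occ (x i) a)
            \<and> (\<forall>(j, b)\<in>Q. captures I (x i) a (x j) b)}
    \<le> (real (card A) ^ l) ^ N * exp (- real (card Q) * ((l / (8 * card A) - 3) / (2 * card A)))"
proof -
  define W where "W = words A l"
  define c where "c = (l / (8 * card A) - 3) / (2 * card A)"
  define D where "D = {..<N} - {i}"
  define row where "row j = {b. (j, b) \<in> Q}" for j
  define V where "V = {v \<in> W. I \<subseteq> occ v a \<and> l \<le> 2 * card A * card (occ v a)}"
  define G where "G v j = {w \<in> W. \<forall>b\<in>row j. captures I v a w b}" for v j
  have fin_W: "finite W"
    using assms(1) by (simp add: W_def finite_words)
  have row_A: "row j \<subseteq> A" for j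
    using assms(4) by (auto simp: row_def)
  have card_Q: "card Q = (\<Sum>j\<in>D. card (row j))"
    using card_eq_sum_card_rows[OF _ assms(1,4)] by (simp add: D_def row_def)
  have "{x \<in> {..<N} \<rightarrow>\<^sub>E W. I \<subseteq> occ (x i) a \<and> l \<le> 2 * card A * card (occ (x i) a)
            \<and> (\<forall>(j, b)\<in>Q. captures I (x i) a (x j) b)}
      \<subseteq> (\<Union>v\<in>V. \<Pi>\<^sub>E j\<in>{..<N}. if j = i then {v} else G v j)"
    using assms(3) by (force simp: V_def G_def row_def PiE_iff)
  moreover have "finite (\<Union>v\<in>V. \<Pi>\<^sub>E j\<in>{..<N}. if j = i then {v} else G v j)"
    using fin_W by (auto simp: V_def G_def intro!: finite_PiE)
  moreover have "card (\<Union>v\<in>V. \<Pi>\<^sub>E j\<in>{..<N}. if j = i then {v} else G v j)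
      \<le> real (card A) ^ l * ((real (card A) ^ l) ^ (N - 1) * exp (- real (card Q) * c))"
  proof (rule card_UN_le_mult)
    show "card V \<le> real (card A) ^ l"
      using card_mono[OF fin_W, of V] assms(1)
      by (auto simp: V_def W_def card_words simp flip: of_nat_power)
  next
    fix v assume v: "v \<in> V"
    have "card (\<Pi>\<^sub>E j\<in>{..<N}. if j = i then {v} else G v j) = (\<Prod>j\<in>D. card (G v j))"
      using card_PiE_fix_coordinate[OF assms(3), of "{v}" "G v"] by (simp add: D_def)
    also have "real \<dots> \<le> (\<Prod>j\<in>D. real (card A) ^ l * exp (- real (card (row j)) * c))"
      unfolding of_nat_prod
    proof (rule prod_mono)
      fix j
      show "0 \<le> real (card (G v j))
        \<and> real (card (G v j)) \<le> real (card A) ^ l * exp (- real (card (row j)) * c)"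
        using card_words_capturing[OF assms(1,2) row_A, of v l I a] v small
        by (simp add: G_def V_def W_def c_def words_def)
    qed
    also have "\<dots> = (real (card A) ^ l) ^ (N - 1) * exp (\<Sum>j\<in>D. - real (card (row j)) * c)"
      using assms(3) by (simp add: prod.distrib exp_sum D_def)
    also have "(\<Sum>j\<in>D. - real (card (row j)) * c) = - real (card Q) * c"
      by (simp add: card_Q sum_distrib_right sum_negf)
    finally show "card (\<Pi>\<^sub>E j\<in>{..<N}. if j = i then {v} else G v j)
        \<le> (real (card A) ^ l) ^ (N - 1) * exp (- real (card Q) * c)" .
  qed (use fin_W in \<open>auto simp: V_def\<close>)
  ultimately have "card {x \<in> {..<N} \<rightarrow>\<^sub>E W. I \<subseteq> occ (x i) a \<and> l \<le> 2 * card A * card (occ (x i) a)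
            \<and> (\<forall>(j, b)\<in>Q. captures I (x i) a (x j) b)}
      \<le> real (card A) ^ l * ((real (card A) ^ l) ^ (N - 1) * exp (- real (card Q) * c))"
    by (meson card_mono of_nat_le_iff order_trans)
  also have "\<dots> = (real (card A) ^ l) ^ N * exp (- real (card Q) * c)"
    using assms(3) by (cases N) auto
  finally show ?thesis
    unfolding W_def c_def .
qed

lemma choose_le_power: "n choose k \<le> n ^ k"
  using binomial_fact_pow[of n k] fact_ge_1[of k, where 'a = nat]
  by (metis dual_order.trans mult_le_mono2 nat_mult_1_right)

lemma card_subsets_of_card_le_power:
  assumes "finite X" "card X \<le> m"
  shows "card {Q. Q \<subseteq> X \<and> card Q = k} \<le> m ^ k"
  using n_subsets[OF assms(1), of k] choose_le_power[of "card X" k] power_mono[OF assms(2), of k]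
  by simp

lemma card_capture_choices:
  fixes N K k :: nat
  assumes "finite A"
  shows "card (SIGMA i:{..<N}. A \<times> {I. I \<subseteq> {..<l} \<and> card I = k}
      \<times> {Q. Q \<subseteq> ({..<N} - {i}) \<times> A \<and> card Q = K})
    \<le> N * card A * 2 ^ l * (N * card A) ^ K"
proof -
  have "card {I. I \<subseteq> {..<l} \<and> card I = k} \<le> 2 ^ l"
    using n_subsets[of "{..<l}" k] binomial_le_pow2[of l k] by simp
  moreover have "card {Q. Q \<subseteq> ({..<N} - {i}) \<times> A \<and> card Q = K} \<le> (N * card A) ^ K" for i
    using assms card_mono[of "{..<N}" "{..<N} - {i}"]
    by (intro card_subsets_of_card_le_power) (auto simp: card_cartesian_product)
  ultimately have "card (A \<times> {I. I \<subseteq> {..<l} \<and> card I = k}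
      \<times> {Q. Q \<subseteq> ({..<N} - {i}) \<times> A \<and> card Q = K})
      \<le> card A * (2 ^ l * (N * card A) ^ K)" for i
    by (simp add: card_cartesian_product mult_le_mono)
  then show ?thesis
    using sum_bounded_above[of "{..<N}" "\<lambda>i. card (A \<times> {I. I \<subseteq> {..<l} \<and> card I = k}
        \<times> {Q. Q \<subseteq> ({..<N} - {i}) \<times> A \<and> card Q = K})"] assms
    by (auto simp: card_SigmaI mult.assoc intro: finite_subset[of _ "Pow {..<l}"] order_trans)
qed

(* Union bound over the entry i, the letter a, the set I and a K-subset Q of the captured pairs. *)
lemma card_tuples_capturing:
  fixes N K k :: nat
  assumes "finite A" "A \<noteq> {}" and small: "k \<le> l / (8 * card A) + 1"
  shows "card {x \<in> {..<N} \<rightarrow>\<^sub>E words A l. \<exists>i<N. \<exists>a\<in>A. \<exists>I. I \<subseteq> occ (x i) a \<and> card I = k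
            \<and> l \<le> 2 * card A * card (occ (x i) a)
            \<and> K \<le> card {(j, b). j \<in> {..<N} - {i} \<and> b \<in> A \<and> captures I (x i) a (x j) b}}
    \<le> real (N * card A * 2 ^ l * (N * card A) ^ K)
      * ((real (card A) ^ l) ^ N * exp (- real K * ((l / (8 * card A) - 3) / (2 * card A))))"
proof -
  define subsets where "subsets = {I. I \<subseteq> {..<l} \<and> card I = k}"
  define patterns where "patterns i = {Q. Q \<subseteq> ({..<N} - {i}) \<times> A \<and> card Q = K}" for i
  define Idx where "Idx = (SIGMA i:{..<N}. A \<times> subsets \<times> patterns i)"
  define E where "E p = (case p of (i, a, I, Q) \<Rightarrow>
      {x \<in> {..<N} \<rightarrow>\<^sub>E words A l. I \<subseteq> occ (x i) a \<and> l \<le> 2 * card A * card (occ (x i) a)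
            \<and> (\<forall>(j, b)\<in>Q. captures I (x i) a (x j) b)})" for p
  have fin_patterns: "finite (patterns i)" for i
    using assms(1) by (auto simp: patterns_def intro: finite_subset[of _ "Pow ({..<N} \<times> A)"])
  have "{x \<in> {..<N} \<rightarrow>\<^sub>E words A l. \<exists>i<N. \<exists>a\<in>A. \<exists>I. I \<subseteq> occ (x i) a \<and> card I = k
            \<and> l \<le> 2 * card A * card (occ (x i) a)
            \<and> K \<le> card {(j, b). j \<in> {..<N} - {i} \<and> b \<in> A \<and> captures I (x i) a (x j) b}}
      \<subseteq> (\<Union>p\<in>Idx. E p)"
  proof
    fix x assume "x \<in> {x \<in> {..<N} \<rightarrow>\<^sub>E words A l. \<exists>i<N. \<exists>a\<in>A. \<exists>I. I \<subseteq> occ (x i) a \<and> card I = k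
            \<and> l \<le> 2 * card A * card (occ (x i) a)
            \<and> K \<le> card {(j, b). j \<in> {..<N} - {i} \<and> b \<in> A \<and> captures I (x i) a (x j) b}}"
    then obtain i a I where x: "x \<in> {..<N} \<rightarrow>\<^sub>E words A l" and i: "i < N" and a: "a \<in> A"
      and I: "I \<subseteq> occ (x i) a" "card I = k" and many: "l \<le> 2 * card A * card (occ (x i) a)"
      and K: "K \<le> card {(j, b). j \<in> {..<N} - {i} \<and> b \<in> A \<and> captures I (x i) a (x j) b}"
      by blast
    obtain Q where Q: "Q \<subseteq> {(j, b). j \<in> {..<N} - {i} \<and> b \<in> A \<and> captures I (x i) a (x j) b}"
      "card Q = K"
      using K by (meson obtain_subset_with_card_n)
    have "length (x i) = l"
      using x i by (auto simp: PiE_iff words_def)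
    then have "I \<in> subsets"
      using I occ_subset_lessThan[of "x i" a] by (auto simp: subsets_def)
    moreover have "Q \<in> patterns i"
      using Q by (auto simp: patterns_def)
    moreover have "x \<in> E (i, a, I, Q)"
      using x I many Q by (auto simp: E_def)
    ultimately show "x \<in> (\<Union>p\<in>Idx. E p)"
      using i a by (auto simp: Idx_def)
  qed
  moreover have "finite (\<Union>p\<in>Idx. E p)"
    by (rule finite_subset[of _ "{..<N} \<rightarrow>\<^sub>E words A l"])
      (auto simp: E_def assms(1) finite_words intro!: finite_PiE)
  moreover have "card (\<Union>p\<in>Idx. E p) \<le> real (N * card A * 2 ^ l * (N * card A) ^ K)
      * ((real (card A) ^ l) ^ N * exp (- real K * ((l / (8 * card A) - 3) / (2 * card A))))"
  proof (rule card_UN_le_mult)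
    show "finite Idx"
      using assms(1) fin_patterns
      by (auto simp: Idx_def subsets_def intro: finite_subset[of _ "Pow {..<l}"])
  next
    show "card Idx \<le> real (N * card A * 2 ^ l * (N * card A) ^ K)"
      using card_capture_choices[OF assms(1), of N l k K]
      unfolding Idx_def subsets_def patterns_def of_nat_le_iff .
  next
    fix p assume "p \<in> Idx"
    then obtain i a I Q where p: "p = (i, a, I, Q)" "i < N" "card I = k"
      "Q \<subseteq> ({..<N} - {i}) \<times> A" "card Q = K"
      by (auto simp: Idx_def subsets_def patterns_def)
    show "card (E p)
        \<le> (real (card A) ^ l) ^ N * exp (- real K * ((l / (8 * card A) - 3) / (2 * card A)))"
      using card_tuples_capturing_set[OF assms(1,2) p(2,4), of I l a] small p
      by (simp add: E_def)
  qed simp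
  ultimately show ?thesis
    by (meson card_mono of_nat_le_iff order_trans)
qed

lemma ex_avoiding_by_card:
  assumes "finite X" "card {x \<in> X. P x} + card {x \<in> X. Q x} + card {x \<in> X. R x} < card X"
  shows "\<exists>x\<in>X. \<not> P x \<and> \<not> Q x \<and> \<not> R x"
proof (rule ccontr)
  assume "\<not> ?thesis"
  then have "X = {x \<in> X. P x} \<union> {x \<in> X. Q x} \<union> {x \<in> X. R x}"
    by blast
  then have "card X \<le> card {x \<in> X. P x} + card {x \<in> X. Q x} + card {x \<in> X. R x}"
    by (metis card_Un_le add_le_mono1 order_trans)
  with assms(2) show False
    by linarith
qed

(* The summand card A accounts for the pairs (x i, b), which may all capture. *)
lemma card_capturing_pairs_image:
  fixes N :: nat
  assumes "finite A" "i < N"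
  shows "card {(w, b). w \<in> x ` {..<N} \<and> b \<in> A \<and> captures I (x i) a w b}
    \<le> card A + card {(j, b). j \<in> {..<N} - {i} \<and> b \<in> A \<and> captures I (x i) a (x j) b}"
proof -
  define P where "P = {(j, b). j \<in> {..<N} - {i} \<and> b \<in> A \<and> captures I (x i) a (x j) b}"
  have fin_P: "finite P"
    using assms(1) by (auto simp: P_def intro: finite_subset[of _ "{..<N} \<times> A"])
  have "{(w, b). w \<in> x ` {..<N} \<and> b \<in> A \<and> captures I (x i) a w b}
      \<subseteq> (\<lambda>(j, b). (x j, b)) ` ({i} \<times> A \<union> P)"
    by (auto simp: P_def image_iff)
  then have "card {(w, b). w \<in> x ` {..<N} \<and> b \<in> A \<and> captures I (x i) a w b}
      \<le> card ((\<lambda>(j, b). (x j, b)) ` ({i} \<times> A \<union> P))"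
    using assms(1) fin_P by (intro card_mono) auto
  also have "\<dots> \<le> card ({i} \<times> A \<union> P)"
    using assms(1) fin_P by (intro card_image_le) auto
  also have "\<dots> \<le> card A + card P"
    using card_Un_le[of "{i} \<times> A" P] by (simp add: card_cartesian_product_singleton)
  finally show ?thesis
    by (simp add: P_def)
qed


section \<open>Numerical estimates and the existence of the code\<close>

lemma exp_le_one_quarter:
  fixes x :: real
  assumes "x \<le> -3"
  shows "exp x \<le> 1/4"
proof -
  have "exp x \<le> exp (-3)"
    using assms by simp
  also have "\<dots> = 1 / exp 3"
    by (simp add: exp_minus field_simps)
  also have "\<dots> \<le> 1/4"
    using exp_ge_add_one_self[of 3] by (simp add: field_simps)
  finally show ?thesis .
qed

lemma two_power_le_exp: "2 ^ m \<le> exp (real m)"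
proof -
  have "(2::real) ^ m \<le> exp 1 ^ m"
    using exp_ge_add_one_self[of 1] by (intro power_mono) auto
  then show ?thesis
    by (simp add: exp_of_nat_mult[symmetric])
qed

context
  fixes r n l :: nat
  assumes r: "r \<ge> 2" and n: "real n \<ge> 2 + log 2 r" and l: "l \<ge> 2^7 * r^3 * n"
begin

lemma parameter_bounds: "n \<ge> 3" "2 ^ n * real r \<le> exp (2 * n)" "real l \<ge> 128 * real r ^ 3 * n"
proof -
  have log_r: "1 \<le> log 2 r"
    using r by (simp add: le_log_iff)
  then show "n \<ge> 3"
    using n by linarith
  have "real r = 2 powr log 2 r"
    using r by simp
  also have "\<dots> \<le> 2 powr n"
    using n log_r by (intro powr_mono) auto
  finally have "real r \<le> 2 ^ n"
    by (simp add: powr_realpow)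
  then have "real r \<le> exp n"
    using two_power_le_exp[of n] by linarith
  then have "2 ^ n * real r \<le> exp n * exp n"
    using two_power_le_exp[of n] by (intro mult_mono) auto
  then show "2 ^ n * real r \<le> exp (2 * n)"
    by (simp add: exp_add[symmetric])
  have "real (2^7 * r^3 * n) \<le> real l"
    using l by (simp only: of_nat_le_iff)
  then show "real l \<ge> 128 * real r ^ 3 * n"
    by simp
qed

lemma few_occ_probability_small: "2 ^ n * real r * exp (- (l / (12 * r))) \<le> 1/4"
proof -
  have r_sq: "real r ^ 2 \<ge> 4"
    using r power_mono[of 2 "real r" 2] by simp
  have "128 * real r ^ 3 * n / (12 * r) \<le> l / (12 * r)"
    using parameter_bounds(3) r by (intro divide_right_mono) auto
  moreover have "128 * real r ^ 3 * n / (12 * r) = 32 / 3 * (real r ^ 2 * n)"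
    using r by (simp add: power_numeral_reduce field_simps)
  moreover have "4 * real n \<le> real r ^ 2 * n"
    using r_sq by (intro mult_right_mono) auto
  ultimately have "2 * n + 3 \<le> l / (12 * r)"
    using parameter_bounds(1) by linarith
  then have "exp (2 * n) * exp (- (l / (12 * r))) \<le> 1/4"
    unfolding exp_add[symmetric] by (intro exp_le_one_quarter) simp
  moreover have "2 ^ n * real r * exp (- (l / (12 * r))) \<le> exp (2 * n) * exp (- (l / (12 * r)))"
    using parameter_bounds(2) by (intro mult_right_mono) auto
  ultimately show ?thesis
    by linarith
qed

lemma collision_probability_small: "4 * 2 ^ n * 2 ^ n \<le> r ^ l"
proof -
  have "128 * n \<le> 2^7 * r^3 * n"
    using r by simp
  then have "n + n + 2 \<le> l"
    using l parameter_bounds(1) by linarith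
  have "4 * 2 ^ n * 2 ^ n = (2::nat) ^ (n + n + 2)"
    by (simp add: power_add)
  also have "\<dots> \<le> 2 ^ l"
    using \<open>n + n + 2 \<le> l\<close> by (intro power_increasing) auto
  also have "\<dots> \<le> r ^ l"
    using r by (intro power_mono) auto
  finally show ?thesis .
qed

lemma capturing_probability_small:
  "real (2 ^ n * r * 2 ^ l * (2 ^ n * r) ^ (128 * r^2))
     * exp (- real (128 * r^2) * ((l / (8 * r) - 3) / (2 * r))) \<le> 1/4"
proof -
  define K where "K = real (128 * r^2)"
  have "real (2 ^ n * r * 2 ^ l * (2 ^ n * r) ^ (128 * r^2))
      = (2 ^ n * real r) * 2 ^ l * (2 ^ n * real r) ^ (128 * r^2)"
    by simp
  also have "\<dots> \<le> exp (2 * n) * exp l * exp (2 * n) ^ (128 * r^2)"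
    using parameter_bounds(2) two_power_le_exp[of l]
    by (intro mult_mono power_mono mult_nonneg_nonneg) auto
  also have "\<dots> = exp (2 * n + l + K * (2 * n))"
    by (simp add: K_def exp_add exp_of_nat_mult[symmetric])
  finally have prefix:
    "real (2 ^ n * r * 2 ^ l * (2 ^ n * r) ^ (128 * r^2)) \<le> exp (2 * n + l + K * (2 * n))" .
  have "K * ((l / (8 * r) - 3) / (2 * r)) = 8 * real l - 192 * real r"
    using r by (simp add: K_def field_simps power2_eq_square)
  moreover have "2 * n + l + K * (2 * n) - (8 * real l - 192 * real r) \<le> -3"
  proof -
    define Y where "Y = real r ^ 2 * n"
    have "128 * (real r * Y) \<le> l"
      using parameter_bounds(3) by (simp add: Y_def power_numeral_reduce mult_ac)
    moreover have "K * (2 * n) = 256 * Y"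
      by (simp add: K_def Y_def)
    moreover have "2 * Y \<le> real r * Y"
      using r by (intro mult_right_mono) (auto simp: Y_def)
    moreover have "4 * real n \<le> Y"
      using power_mono[of 2 "real r" 2] r by (auto simp: Y_def intro!: mult_right_mono)
    moreover have "3 * real r \<le> Y"
    proof -
      have "3 \<le> real r * n"
        using r parameter_bounds(1) mult_mono[of 1 "real r" 3 "real n"] by simp
      then show ?thesis
        using mult_left_mono[of 3 "real r * n" "real r"]
        by (simp add: Y_def power2_eq_square mult_ac)
    qed
    ultimately show ?thesis
      using parameter_bounds(1) by linarith
  qed
  ultimately have "exp (2 * n + l + K * (2 * n)) * exp (- K * ((l / (8 * r) - 3) / (2 * r))) \<le> 1/4"
    unfolding exp_add[symmetric] by (intro exp_le_one_quarter) simp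
  with prefix show ?thesis
    unfolding K_def by (smt (verit) exp_gt_zero mult_right_mono)
qed


context
  fixes A :: "'a set"
  assumes A: "finite A" "card A = r"
begin

lemma card_tuple_space: "card ({..<(2::nat)^n} \<rightarrow>\<^sub>E words A l) = (real r ^ l) ^ 2^n"
  using A by (simp add: card_PiE card_words)

lemma few_occ_tuples_le_quarter:
  "card {x \<in> {..<(2::nat)^n} \<rightarrow>\<^sub>E words A l. \<exists>i<2^n. \<exists>a\<in>A. l > 2 * r * card (occ (x i) a)}
    \<le> card ({..<(2::nat)^n} \<rightarrow>\<^sub>E words A l) / 4"
proof -
  have "card {x \<in> {..<(2::nat)^n} \<rightarrow>\<^sub>E words A l. \<exists>i<2^n. \<exists>a\<in>A. l > 2 * r * card (occ (x i) a)}
      \<le> (2 ^ n * real r * exp (- (l / (12 * r)))) * (real r ^ l) ^ 2^n"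
    using card_tuples_few_occ[OF A(1), of "2^n" l] A(2) by (simp add: mult_ac)
  also have "\<dots> \<le> 1/4 * (real r ^ l) ^ 2^n"
    using few_occ_probability_small by (intro mult_right_mono) auto
  finally show ?thesis
    by (simp add: card_tuple_space)
qed

lemma collision_tuples_le_quarter:
  "card {x \<in> {..<(2::nat)^n} \<rightarrow>\<^sub>E words A l. \<not> inj_on x {..<2^n}}
    \<le> card ({..<(2::nat)^n} \<rightarrow>\<^sub>E words A l) / 4"
proof -
  have "4 * card {x \<in> {..<(2::nat)^n} \<rightarrow>\<^sub>E words A l. \<not> inj_on x {..<2^n}}
      \<le> 4 * (2^n * 2^n * (r ^ l) ^ (2^n - 1))"
    using card_tuples_not_inj[of "words A l" "2^n"] A by (simp add: finite_words card_words)
  also have "\<dots> \<le> r ^ l * (r ^ l) ^ (2^n - 1)"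
    using collision_probability_small by (metis mult.assoc mult_le_mono1)
  also have "\<dots> = (r ^ l) ^ 2^n"
    by (simp add: power_Suc[symmetric])
  finally have "real (4 * card {x \<in> {..<(2::nat)^n} \<rightarrow>\<^sub>E words A l. \<not> inj_on x {..<2^n}})
      \<le> real ((r ^ l) ^ 2^n)"
    by (simp only: of_nat_le_iff)
  then show ?thesis
    by (simp add: card_tuple_space)
qed

lemma capturing_tuples_le_quarter:
  "card {x \<in> {..<(2::nat)^n} \<rightarrow>\<^sub>E words A l. \<exists>i<2^n. \<exists>a\<in>A. \<exists>I. I \<subseteq> occ (x i) a
      \<and> card I = nat \<lceil>real l / (8 * real r)\<rceil> \<and> l \<le> 2 * r * card (occ (x i) a)
      \<and> 128 * r^2 \<le> card {(j, b). j \<in> {..<2^n} - {i} \<and> b \<in> A \<and> captures I (x i) a (x j) b}}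
    \<le> card ({..<(2::nat)^n} \<rightarrow>\<^sub>E words A l) / 4"
proof -
  have "0 \<le> real l / (8 * real r)"
    by simp
  then have "real (nat \<lceil>real l / (8 * real r)\<rceil>) = of_int \<lceil>real l / (8 * real r)\<rceil>"
    by (intro of_nat_nat) (metis ceiling_mono ceiling_zero)
  then have "nat \<lceil>real l / (8 * real r)\<rceil> \<le> l / (8 * card A) + 1"
    using of_int_ceiling_le_add_one A(2) by simp
  moreover have "A \<noteq> {}"
    using A(2) r by auto
  ultimately have "card {x \<in> {..<(2::nat)^n} \<rightarrow>\<^sub>E words A l. \<exists>i<2^n. \<exists>a\<in>A. \<exists>I. I \<subseteq> occ (x i) a
      \<and> card I = nat \<lceil>real l / (8 * real r)\<rceil> \<and> l \<le> 2 * r * card (occ (x i) a)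
      \<and> 128 * r^2 \<le> card {(j, b). j \<in> {..<2^n} - {i} \<and> b \<in> A \<and> captures I (x i) a (x j) b}}
    \<le> real (2 ^ n * r * 2 ^ l * (2 ^ n * r) ^ (128 * r^2))
       * ((real r ^ l) ^ 2^n * exp (- real (128 * r^2) * ((l / (8 * r) - 3) / (2 * r))))"
    using card_tuples_capturing[OF A(1), of _ l "2^n" "128 * r^2"] unfolding A(2) by blast
  also have "\<dots> = (real (2 ^ n * r * 2 ^ l * (2 ^ n * r) ^ (128 * r^2))
       * exp (- real (128 * r^2) * ((l / (8 * r) - 3) / (2 * r)))) * (real r ^ l) ^ 2^n"
    by (simp only: mult_ac)
  also have "\<dots> \<le> 1/4 * (real r ^ l) ^ 2^n"
    using capturing_probability_small by (intro mult_right_mono) auto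
  finally show ?thesis
    by (simp add: card_tuple_space)
qed

lemma exists_good_tuple:
  "\<exists>x \<in> {..<(2::nat)^n} \<rightarrow>\<^sub>E words A l. inj_on x {..<2^n}
    \<and> (\<forall>i<2^n. \<forall>a\<in>A. l \<le> 2 * r * card (occ (x i) a))
    \<and> (\<forall>i<2^n. \<forall>a\<in>A. \<forall>I. I \<subseteq> occ (x i) a \<longrightarrow> card I = nat \<lceil>real l / (8 * real r)\<rceil> \<longrightarrow>
         card {(j, b). j \<in> {..<2^n} - {i} \<and> b \<in> A \<and> captures I (x i) a (x j) b} < 128 * r^2)"
proof -
  define X where "X = {..<(2::nat)^n} \<rightarrow>\<^sub>E words A l"
  define few where "few x \<longleftrightarrow> (\<exists>i<(2::nat)^n. \<exists>a\<in>A. l > 2 * r * card (occ (x i) a))" for x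
  define capturing where "capturing x \<longleftrightarrow> (\<exists>i<(2::nat)^n. \<exists>a\<in>A. \<exists>I. I \<subseteq> occ (x i) a
      \<and> card I = nat \<lceil>real l / (8 * real r)\<rceil> \<and> l \<le> 2 * r * card (occ (x i) a)
      \<and> 128 * r^2 \<le> card {(j, b). j \<in> {..<2^n} - {i} \<and> b \<in> A \<and> captures I (x i) a (x j) b})" for x
  have "real (card X) > 0"
    using r by (simp add: X_def card_tuple_space)
  then have "real (card {x \<in> X. few x} + card {x \<in> X. \<not> inj_on x {..<2^n}}
      + card {x \<in> X. capturing x})
      < real (card X)"
    using few_occ_tuples_le_quarter collision_tuples_le_quarter capturing_tuples_le_quarter
    unfolding X_def few_def capturing_def by simp
  then obtain x where x: "x \<in> X" "\<not> few x" "inj_on x {..<2^n}" "\<not> capturing x"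
    using ex_avoiding_by_card[of X few "\<lambda>x. \<not> inj_on x {..<2^n}" capturing] A(1)
    by (auto simp: X_def finite_words finite_PiE simp flip: of_nat_less_iff)
  have many: "l \<le> 2 * r * card (occ (x i) a)" if "i < 2^n" "a \<in> A" for i a
    using x(2) that unfolding few_def by (meson not_le)
  have "card {(j, b). j \<in> {..<2^n} - {i} \<and> b \<in> A \<and> captures I (x i) a (x j) b} < 128 * r^2"
    if "i < 2^n" "a \<in> A" "I \<subseteq> occ (x i) a" "card I = nat \<lceil>real l / (8 * real r)\<rceil>" for i a I
    using x(4) many[OF that(1,2)] that unfolding capturing_def by (meson not_le)
  with x(1,3) many show ?thesis
    unfolding X_def by blast
qed

lemma exists_word_code:
  shows "\<exists>S \<subseteq> words A l. card S = 2^n \<and> (\<forall>v\<in>S. \<forall>a\<in>A. real (card (occ v a)) \<ge> real l / (2 * real r)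
    \<and> (\<forall>I. I \<subseteq> occ v a \<longrightarrow> card I = nat \<lceil>real l / (8 * real r)\<rceil> \<longrightarrow>
         real (card {(w, b). w \<in> S \<and> b \<in> A \<and> captures I v a w b}) \<le> 129 * (real r)^2))"
proof -
  obtain x where x: "x \<in> {..<(2::nat)^n} \<rightarrow>\<^sub>E words A l" "inj_on x {..<2^n}"
    and many: "\<forall>i<2^n. \<forall>a\<in>A. l \<le> 2 * r * card (occ (x i) a)"
    and few: "\<forall>i<2^n. \<forall>a\<in>A. \<forall>I. I \<subseteq> occ (x i) a \<longrightarrow> card I = nat \<lceil>real l / (8 * real r)\<rceil> \<longrightarrow>
         card {(j, b). j \<in> {..<2^n} - {i} \<and> b \<in> A \<and> captures I (x i) a (x j) b} < 128 * r^2"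
    using exists_good_tuple by blast
  have "real l / (2 * real r) \<le> card (occ (x i) a)" if "i < 2^n" "a \<in> A" for i a
  proof -
    have "real l \<le> real (2 * r * card (occ (x i) a))"
      using many that by (simp only: of_nat_le_iff)
    then show ?thesis
      using r by (simp add: field_simps)
  qed
  moreover have "real (card {(w, b). w \<in> x ` {..<2^n} \<and> b \<in> A \<and> captures I (x i) a w b})
      \<le> 129 * (real r)^2"
    if "i < 2^n" "a \<in> A" "I \<subseteq> occ (x i) a" "card I = nat \<lceil>real l / (8 * real r)\<rceil>" for i a I
  proof -
    have "card {(j, b). j \<in> {..<2^n} - {i} \<and> b \<in> A \<and> captures I (x i) a (x j) b} < 128 * r^2"
      using few that by blast
    then have "card {(w, b). w \<in> x ` {..<2^n} \<and> b \<in> A \<and> captures I (x i) a w b} \<le> r + 128 * r^2"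
      using card_capturing_pairs_image[OF A(1) that(1), of x I a] A(2) by linarith
    also have "\<dots> \<le> 129 * r^2"
      by (simp add: power2_eq_square)
    finally have "real (card {(w, b). w \<in> x ` {..<2^n} \<and> b \<in> A \<and> captures I (x i) a w b})
        \<le> real (129 * r^2)"
      by (simp only: of_nat_le_iff)
    then show ?thesis
      by simp
  qed
  moreover have "x ` {..<2^n} \<subseteq> words A l"
    using x(1) by (intro image_subsetI) (simp add: PiE_iff)
  moreover have "card (x ` {..<2^n}) = 2^n"
    using card_image[OF x(2)] by simp
  ultimately show ?thesis
    by (intro exI[of _ "x ` {..<2^n}"]) blast
qed


end

end

theorem lemma2:
  "\<exists>C::real. \<forall>(\<Sigma>::nat set) r n l.
     finite \<Sigma> \<longrightarrow> card \<Sigma> = r \<longrightarrow> r \<ge> 2 \<longrightarrow>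
     real n \<ge> 2 + log 2 (real r) \<longrightarrow> l \<ge> 2^7 * r^3 * n \<longrightarrow>
     (\<exists>S. S \<subseteq> {v. length v = l \<and> set v \<subseteq> \<Sigma>} \<and> card S = 2^n \<and>
        (\<forall>v\<in>S. \<forall>a\<in>\<Sigma>.
           real (card (occ v a)) \<ge> real l / (2 * real r) \<and>
           (\<forall>I. I \<subseteq> occ v a \<longrightarrow> card I = nat \<lceil>real l / (8 * real r)\<rceil> \<longrightarrow>
              real (card {(w, b). w \<in> S \<and> b \<in> \<Sigma> \<and>
                  2 * card (I \<inter> occ w b) \<ge> card (occ v a \<inter> occ w b)})
                \<le> C * (real r)^2)))"
  using exists_word_code unfolding words_def captures_def by (intro exI[of _ 129] allI impI)

end
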